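(* Let $C\in\mathbb{R}^{p\times p}$ be positive definite, $w\in\mathbb{R}^p$, $\mu>0$. For $\tau>0$ let $\hat u_\tau\in(-\mu,\mu)^p$ be the unique real solution of $(\mu^2-u_j^2)[C^{-1}(w-u)]_j-u_j/\tau=0$ ($j=1,\dots,p$), and let $\hat x_\tau=C^{-1}(w-\hat u_\tau)$. Let $\hat u=\lim_{\tau\to\infty}\hat u_\tau$ and $\hat x=C^{-1}(w-\hat u)$, and define $I=\{j:\hat x_j\neq0\}$, $I^c_t=\{j\notin I:|\hat u_j|=\mu\}$ and $I^c_{nt}=\{j\notin I:|\hat u_j|<\mu\}$. Then, as $\tau\to\infty$, $$\tau(\mu^2-\hat u_{\tau,j}^2)^2=\begin{cases}O(\tau^{-1}) & j\in I,\\ O\bigl[(\tau\hat x_{\tau,j}^2)^{-1}\bigr] & j\in I^c_t,\\ O(\tau) & j\in I^c_{nt}.\end{cases}$$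
   Context: Standing facts of the setting: $\hat u_\tau\to\hat u$ as $\tau\to\infty$, where $\hat u$ is the unique minimizer of $(w-u)^TC^{-1}(w-u)$ over the box $\{u\in\mathbb{R}^p:|u_j|\le\mu\ \forall j\}$; then $\hat x=C^{-1}(w-\hat u)$ is the unique minimizer of $H(x)=x^TCx-2w^Tx+2\mu\|x\|_1$, and $\hat x_\tau\to\hat x$. $I$ is the set of nonzero coordinates of $\hat x$; $I^c_t$ are the "transition" coordinates (zero in $\hat x$ but with $|\hat u_j|=\mu$) and $I^c_{nt}$ the non-transition zero coordinates. *)

theory Defs
  imports "HOL-Analysis.Analysis" "HOL-Library.Landau_Symbols"
begin

definition pos_def_matrix :: "real^'n^'n \<Rightarrow> bool" where
  "pos_def_matrix C \<longleftrightarrow> transpose C = C \<and> (\<forall>x. x \<noteq> 0 \<longrightarrow> x \<bullet> (C *v x) > 0)"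

definition solves_tau :: "real^'n^'n \<Rightarrow> real^'n \<Rightarrow> real \<Rightarrow> real \<Rightarrow> real^'n \<Rightarrow> bool" where
  "solves_tau C w \<mu> \<tau> u \<longleftrightarrow>
     (\<forall>j. \<bar>u $ j\<bar> < \<mu>) \<and>
     (\<forall>j. (\<mu>\<^sup>2 - (u $ j)\<^sup>2) * ((matrix_inv C *v (w - u)) $ j) - u $ j / \<tau> = 0)"

end

theory Submission
  imports Defs
begin

text \<open>Writing \<open>x = C\<inverse>(w - u)\<close>, coordinate \<open>j\<close> of the equation says
  \<open>\<mu>\<^sup>2 - u\<^sub>j\<^sup>2 = u\<^sub>j / (\<tau> x\<^sub>j)\<close>, hence \<open>\<tau> (\<mu>\<^sup>2 - u\<^sub>j\<^sup>2)\<^sup>2 = u\<^sub>j\<^sup>2 / (\<tau> x\<^sub>j\<^sup>2) \<le> \<mu>\<^sup>2 / (\<tau> x\<^sub>j\<^sup>2)\<close>.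
  This gives the rate on the transition coordinates, where \<open>u\<^sub>j \<noteq> 0\<close> eventually forces
  \<open>x\<^sub>j \<noteq> 0\<close>, and on the support \<open>I\<close>, where \<open>x\<^sub>j\<close> stays away from zero. Off the support
  only the box constraint \<open>\<bar>u\<^sub>j\<bar> < \<mu>\<close> is available, giving the bound \<open>\<mu>\<^sup>4 \<tau>\<close>.\<close>

lemma gap_sq_le_div:
  fixes \<tau> \<mu> u x :: real
  assumes "\<tau> > 0" and "\<bar>u\<bar> < \<mu>" and "(\<mu>\<^sup>2 - u\<^sup>2) * x - u / \<tau> = 0" and "x \<noteq> 0"
  shows "\<tau> * (\<mu>\<^sup>2 - u\<^sup>2)\<^sup>2 \<le> \<mu>\<^sup>2 / (\<tau> * x\<^sup>2)"
proof -
  have gap: "\<mu>\<^sup>2 - u\<^sup>2 = u / (\<tau> * x)"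
    using assms by (simp add: field_simps)
  have "\<tau> * (\<mu>\<^sup>2 - u\<^sup>2)\<^sup>2 = u\<^sup>2 / (\<tau> * x\<^sup>2)"
    unfolding gap using assms by (simp add: field_simps power2_eq_square)
  also have "\<dots> \<le> \<mu>\<^sup>2 / (\<tau> * x\<^sup>2)"
    using assms(1,2) by (intro divide_right_mono) (auto simp: power2_le_iff_abs_le)
  finally show ?thesis .
qed

lemma gap_sq_le_box:
  fixes \<tau> \<mu> u :: real
  assumes "\<tau> \<ge> 0" and "\<bar>u\<bar> \<le> \<mu>"
  shows "\<tau> * (\<mu>\<^sup>2 - u\<^sup>2)\<^sup>2 \<le> \<mu> ^ 4 * \<tau>"
proof -
  have "0 \<le> \<mu>\<^sup>2 - u\<^sup>2" and "\<mu>\<^sup>2 - u\<^sup>2 \<le> \<mu>\<^sup>2"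
    using assms(2) by (auto simp: power2_le_iff_abs_le)
  then have "(\<mu>\<^sup>2 - u\<^sup>2)\<^sup>2 \<le> \<mu> ^ 4"
    using power_mono[of "\<mu>\<^sup>2 - u\<^sup>2" "\<mu>\<^sup>2" 2] by simp
  then show ?thesis
    using assms(1) by (simp add: mult.commute mult_left_mono)
qed

lemma bigo_gap_tau:
  fixes u :: "real \<Rightarrow> real" and \<mu> :: real
  assumes "\<forall>\<^sub>F \<tau> in at_top. \<bar>u \<tau>\<bar> < \<mu>"
  shows "(\<lambda>\<tau>. \<tau> * (\<mu>\<^sup>2 - (u \<tau>)\<^sup>2)\<^sup>2) \<in> O[at_top](\<lambda>\<tau>. \<tau>)"
proof (rule bigoI[where c = "\<mu> ^ 4"])
  show "\<forall>\<^sub>F \<tau> in at_top. norm (\<tau> * (\<mu>\<^sup>2 - (u \<tau>)\<^sup>2)\<^sup>2) \<le> \<mu> ^ 4 * norm \<tau>"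
    using assms eventually_gt_at_top[of 0]
    by eventually_elim (use gap_sq_le_box in auto)
qed

lemma bigo_gap_inverse_sq:
  fixes u x :: "real \<Rightarrow> real" and \<mu> :: real
  assumes eq: "\<forall>\<^sub>F \<tau> in at_top. \<bar>u \<tau>\<bar> < \<mu> \<and> (\<mu>\<^sup>2 - (u \<tau>)\<^sup>2) * x \<tau> - u \<tau> / \<tau> = 0"
    and nz: "\<forall>\<^sub>F \<tau> in at_top. x \<tau> \<noteq> 0"
  shows "(\<lambda>\<tau>. \<tau> * (\<mu>\<^sup>2 - (u \<tau>)\<^sup>2)\<^sup>2) \<in> O[at_top](\<lambda>\<tau>. 1 / (\<tau> * (x \<tau>)\<^sup>2))"
proof (rule bigoI[where c = "\<mu>\<^sup>2"])
  show "\<forall>\<^sub>F \<tau> in at_top. norm (\<tau> * (\<mu>\<^sup>2 - (u \<tau>)\<^sup>2)\<^sup>2) \<le> \<mu>\<^sup>2 * norm (1 / (\<tau> * (x \<tau>)\<^sup>2))"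
    using eq nz eventually_gt_at_top[of 0]
  proof eventually_elim
    case (elim \<tau>)
    then have "\<tau> * (\<mu>\<^sup>2 - (u \<tau>)\<^sup>2)\<^sup>2 \<le> \<mu>\<^sup>2 / (\<tau> * (x \<tau>)\<^sup>2)"
      by (intro gap_sq_le_div) auto
    then show ?case
      using elim(3) by simp
  qed
qed

lemma bigo_gap_of_nonzero_limit:
  fixes u x :: "real \<Rightarrow> real" and \<mu> a :: real
  assumes eq: "\<forall>\<^sub>F \<tau> in at_top. \<bar>u \<tau>\<bar> < \<mu> \<and> (\<mu>\<^sup>2 - (u \<tau>)\<^sup>2) * x \<tau> - u \<tau> / \<tau> = 0"
    and x: "(x \<longlongrightarrow> a) at_top" and "a \<noteq> 0"
  shows "(\<lambda>\<tau>. \<tau> * (\<mu>\<^sup>2 - (u \<tau>)\<^sup>2)\<^sup>2) \<in> O[at_top](\<lambda>\<tau>. 1 / \<tau>)"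
proof -
  have nz: "\<forall>\<^sub>F \<tau> in at_top. x \<tau> \<noteq> 0"
    using x \<open>a \<noteq> 0\<close> by (rule tendsto_imp_eventually_ne)
  have "((\<lambda>\<tau>. 1 / (x \<tau>)\<^sup>2) \<longlongrightarrow> 1 / a\<^sup>2) at_top"
    using x \<open>a \<noteq> 0\<close> by (intro tendsto_intros) auto
  then have "((\<lambda>\<tau>. (1 / (\<tau> * (x \<tau>)\<^sup>2)) / (1 / \<tau>)) \<longlongrightarrow> 1 / a\<^sup>2) at_top"
    by (rule Lim_transform_eventually) (use eventually_gt_at_top[of 0] in eventually_elim, simp)
  then have "(\<lambda>\<tau>. 1 / (\<tau> * (x \<tau>)\<^sup>2)) \<in> O[at_top](\<lambda>\<tau>. 1 / \<tau>)"
    by (rule bigoI_tendsto) (use eventually_gt_at_top[of 0] in eventually_elim, simp)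
  with bigo_gap_inverse_sq[OF eq nz] show ?thesis
    by (rule landau_o.big_trans)
qed

lemma bigo_gap_of_boundary_limit:
  fixes u x :: "real \<Rightarrow> real" and \<mu> b :: real
  assumes eq: "\<forall>\<^sub>F \<tau> in at_top. \<bar>u \<tau>\<bar> < \<mu> \<and> (\<mu>\<^sup>2 - (u \<tau>)\<^sup>2) * x \<tau> - u \<tau> / \<tau> = 0"
    and u: "(u \<longlongrightarrow> b) at_top" and "\<bar>b\<bar> = \<mu>" and "\<mu> > 0"
  shows "(\<lambda>\<tau>. \<tau> * (\<mu>\<^sup>2 - (u \<tau>)\<^sup>2)\<^sup>2) \<in> O[at_top](\<lambda>\<tau>. 1 / (\<tau> * (x \<tau>)\<^sup>2))"
proof (rule bigo_gap_inverse_sq[OF eq])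
  have "b \<noteq> 0"
    using assms(3,4) by auto
  with u have "\<forall>\<^sub>F \<tau> in at_top. u \<tau> \<noteq> 0"
    by (rule tendsto_imp_eventually_ne)
  then show "\<forall>\<^sub>F \<tau> in at_top. x \<tau> \<noteq> 0"
    using eq eventually_gt_at_top[of 0] by eventually_elim auto
qed

theorem lemma2:
  fixes C :: "real^'n^'n" and w :: "real^'n" and \<mu> :: real
    and uhat :: "real \<Rightarrow> real^'n" and u0 :: "real^'n"
  assumes C: "pos_def_matrix C"
    and mu: "\<mu> > 0"
    and sol: "\<And>\<tau>. \<tau> > 0 \<Longrightarrow> solves_tau C w \<mu> \<tau> (uhat \<tau>)"
    and uniq: "\<And>\<tau> u. \<tau> > 0 \<Longrightarrow> solves_tau C w \<mu> \<tau> u \<Longrightarrow> u = uhat \<tau>"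
    and lim: "(uhat \<longlongrightarrow> u0) at_top"
  defines "xhat \<equiv> (\<lambda>\<tau>. matrix_inv C *v (w - uhat \<tau>))"
    and "x0 \<equiv> matrix_inv C *v (w - u0)"
  shows
    "(\<forall>j. x0 $ j \<noteq> 0 \<longrightarrow>
        (\<lambda>\<tau>. \<tau> * (\<mu>\<^sup>2 - (uhat \<tau> $ j)\<^sup>2)\<^sup>2) \<in> O[at_top](\<lambda>\<tau>. 1 / \<tau>))
   \<and> (\<forall>j. x0 $ j = 0 \<and> \<bar>u0 $ j\<bar> = \<mu> \<longrightarrow>
        (\<lambda>\<tau>. \<tau> * (\<mu>\<^sup>2 - (uhat \<tau> $ j)\<^sup>2)\<^sup>2) \<in> O[at_top](\<lambda>\<tau>. 1 / (\<tau> * (xhat \<tau> $ j)\<^sup>2)))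
   \<and> (\<forall>j. x0 $ j = 0 \<and> \<bar>u0 $ j\<bar> < \<mu> \<longrightarrow>
        (\<lambda>\<tau>. \<tau> * (\<mu>\<^sup>2 - (uhat \<tau> $ j)\<^sup>2)\<^sup>2) \<in> O[at_top](\<lambda>\<tau>. \<tau>))"
proof -
  have eq: "\<forall>\<^sub>F \<tau> in at_top. \<bar>uhat \<tau> $ j\<bar> < \<mu>
      \<and> (\<mu>\<^sup>2 - (uhat \<tau> $ j)\<^sup>2) * xhat \<tau> $ j - uhat \<tau> $ j / \<tau> = 0" for j
    using eventually_gt_at_top[of 0]
    by eventually_elim (use sol in \<open>auto simp: solves_tau_def xhat_def\<close>)
  have "(xhat \<longlongrightarrow> x0) at_top"
    unfolding xhat_def x0_def
    by (intro bounded_linear.tendsto[OF matrix_vector_mul_bounded_linear] tendsto_intros lim)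
  then have xlim: "((\<lambda>\<tau>. xhat \<tau> $ j) \<longlongrightarrow> x0 $ j) at_top" for j
    by (rule tendsto_vec_nth)
  have ulim: "((\<lambda>\<tau>. uhat \<tau> $ j) \<longlongrightarrow> u0 $ j) at_top" for j
    using lim by (rule tendsto_vec_nth)
  have box: "\<forall>\<^sub>F \<tau> in at_top. \<bar>uhat \<tau> $ j\<bar> < \<mu>" for j
    using eq[of j] by (rule eventually_mono) simp
  show ?thesis
    using bigo_gap_of_nonzero_limit[OF eq xlim] bigo_gap_of_boundary_limit[OF eq ulim _ mu]
      bigo_gap_tau[OF box]
    by blast
qed

end
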